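(* Let $0<p<\infty$ be such that $p$ is not an even integer, and let $k=\lceil p/2\rceil$. Then $\sum_{j=0}^{k-1}\binom{2k}{j}(-1)^j(k-j)^p\neq 0.$ *)

theory Defs
  imports Complex_Main
begin

end

theory Submission
  imports Defs
begin

text \<open>
  Let \<open>F z = (\<Sum>j<k. (-1)^j (2k choose j) (k - j) powr z)\<close>. For \<open>1 \<le> m < k\<close> the value
  \<open>F (2m)\<close> is half of the \<open>2k\<close>-th finite difference of \<open>x^(2m)\<close> at \<open>x = k\<close> (the terms
  \<open>j\<close> and \<open>2k - j\<close> agree and the middle one vanishes), so \<open>F\<close> vanishes at \<open>2, 4, \<dots>, 2k - 2\<close>.
  On the other hand \<open>F\<close> is a sum of \<open>k\<close> exponentials \<open>exp (z ln (k - j))\<close> with distinct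
  exponents and nonzero coefficients, and such a sum has fewer than \<open>k\<close> real zeros: dividing
  by one exponential and applying Rolle's theorem passes the zeros to an exponential sum
  with one term fewer. Since \<open>2k - 2 < p < 2k\<close>, the point \<open>p\<close> would be a \<open>k\<close>-th zero.
\<close>

lemma alternating_binomial_sum_Suc:
  fixes f :: "nat \<Rightarrow> 'a::comm_ring_1"
  shows "(\<Sum>j\<le>Suc N. of_nat (Suc N choose j) * (-1)^j * f j)
       = (\<Sum>j\<le>N. of_nat (N choose j) * (-1)^j * (f j - f (Suc j)))"
proof -
  have "(\<Sum>j\<le>Suc N. of_nat (Suc N choose j) * (-1)^j * f j)
      = f 0 + (\<Sum>j\<le>N. of_nat (Suc N choose Suc j) * (-1)^Suc j * f (Suc j))"
    by (subst sum.atMost_Suc_shift) simp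
  also have "\<dots> = f 0 + (\<Sum>j\<le>N. of_nat (N choose Suc j) * (-1)^Suc j * f (Suc j))
                    + (\<Sum>j\<le>N. of_nat (N choose j) * (-1)^Suc j * f (Suc j))"
    by (simp only: add.assoc flip: sum.distrib) (simp add: algebra_simps)
  also have "f 0 + (\<Sum>j\<le>N. of_nat (N choose Suc j) * (-1)^Suc j * f (Suc j))
      = (\<Sum>j\<le>Suc N. of_nat (N choose j) * (-1)^j * f j)"
    by (subst sum.atMost_Suc_shift) simp
  also have "\<dots> = (\<Sum>j\<le>N. of_nat (N choose j) * (-1)^j * f j)"
    by (simp add: binomial_eq_0)
  finally show ?thesis
    by (simp add: right_diff_distrib sum_subtractf sum_negf)
qed

lemma alternating_binomial_sum_power_eq_0:
  fixes x :: "'a::comm_ring_1"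
  assumes "r < N"
  shows "(\<Sum>j\<le>N. of_nat (N choose j) * (-1)^j * (x - of_nat j)^r) = 0"
  using assms
proof (induction N arbitrary: r)
  case 0
  then show ?case by simp
next
  case (Suc N)
  have step: "(x - of_nat j)^r - (x - of_nat (Suc j))^r
      = - (\<Sum>i<r. of_nat (r choose i) * (-1)^(r-i) * (x - of_nat j)^i)" for j
  proof -
    have "(x - of_nat (Suc j))^r = ((x - of_nat j) + (-1))^r" by (simp add: algebra_simps)
    also have "\<dots> = (\<Sum>i\<le>r. of_nat (r choose i) * (x - of_nat j)^i * (-1)^(r-i))"
      by (rule binomial_ring)
    also have "\<dots> = (\<Sum>i<r. of_nat (r choose i) * (-1)^(r-i) * (x - of_nat j)^i) + (x - of_nat j)^r"
      by (simp add: lessThan_Suc_atMost[symmetric] algebra_simps)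
    finally show ?thesis by simp
  qed
  have "(\<Sum>j\<le>Suc N. of_nat (Suc N choose j) * (-1)^j * (x - of_nat j)^r)
      = - (\<Sum>j\<le>N. \<Sum>i<r. of_nat (N choose j) * (-1)^j * (of_nat (r choose i) * (-1)^(r-i) * (x - of_nat j)^i))"
    unfolding alternating_binomial_sum_Suc step by (simp add: sum_distrib_left sum_negf)
  also have "\<dots> = - (\<Sum>i<r. of_nat (r choose i) * (-1)^(r-i) *
                      (\<Sum>j\<le>N. of_nat (N choose j) * (-1)^j * (x - of_nat j)^i))"
    by (subst sum.swap) (simp add: sum_distrib_left mult.assoc mult.left_commute)
  also have "\<dots> = 0"
    using Suc by simp
  finally show ?case .
qed

lemma alternating_binomial_half_sum_even_power_eq_0:
  fixes k m :: nat
  assumes "1 \<le> m" "m < k"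
  shows "(\<Sum>j=0..k-1. of_nat ((2*k) choose j) * (-1)^j *
            (of_nat (k-j) :: 'a::{idom,ring_char_0})^(2*m)) = 0"
proof -
  define g :: "nat \<Rightarrow> 'a"
    where "g j = of_nat ((2*k) choose j) * (-1)^j * (of_nat k - of_nat j)^(2*m)" for j
  have g_symmetric: "g (2*k - j) = g j" if "j \<le> 2*k" for j
  proof -
    have "(of_nat k - of_nat (2*k - j) :: 'a) = - (of_nat k - of_nat j)"
      using that by simp
    then show ?thesis
      using that by (simp add: g_def binomial_symmetric[symmetric] minus_one_power_iff power_mult
          power2_commute)
  qed
  have "(\<Sum>j\<le>2*k. g j) = 0"
    unfolding g_def using assms by (intro alternating_binomial_sum_power_eq_0) simp
  moreover have "{..2*k} = {0..k-1} \<union> ({k} \<union> {k+1..2*k})"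
    using assms by auto
  then have "(\<Sum>j\<le>2*k. g j) = (\<Sum>j=0..k-1. g j) + (g k + (\<Sum>j=k+1..2*k. g j))"
    using assms by (simp add: sum.union_disjoint)
  moreover have "g k = 0"
    using assms by (simp add: g_def)
  moreover have "(\<Sum>j=k+1..2*k. g j) = (\<Sum>j=0..k-1. g j)"
    by (rule sum.reindex_bij_witness[of _ "\<lambda>j. 2*k - j" "\<lambda>j. 2*k - j"])
      (use assms g_symmetric in auto)
  ultimately have "(\<Sum>j=0..k-1. g j) = 0"
    by simp
  moreover have "(\<Sum>j=0..k-1. g j) = (\<Sum>j=0..k-1. of_nat ((2*k) choose j) * (-1)^j * (of_nat (k-j) :: 'a)^(2*m))"
    by (intro sum.cong) (auto simp: g_def)
  ultimately show ?thesis by simp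
qed

lemma Rolle_card_deriv_zeros:
  fixes g g' :: "real \<Rightarrow> real"
  assumes der: "\<And>x. (g has_real_derivative g' x) (at x)"
    and "finite Z" "card Z = Suc n" "\<And>z. z \<in> Z \<Longrightarrow> g z = 0"
  shows "\<exists>W. finite W \<and> card W = n \<and> (\<forall>w\<in>W. g' w = 0 \<and> w < Max Z)"
  using assms(2-)
proof (induction n arbitrary: Z)
  case 0
  then show ?case by (intro exI[of _ "{}"]) simp
next
  case (Suc n)
  define M where "M = Max Z"
  define Z' where "Z' = Z - {M}"
  have "M \<in> Z"
    using Suc.prems unfolding M_def by (intro Max_in) auto
  then have "finite Z'" "card Z' = Suc n"
    using Suc.prems unfolding Z'_def by auto
  then obtain W' where W': "finite W'" "card W' = n" "\<forall>w\<in>W'. g' w = 0 \<and> w < Max Z'"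
    using Suc.IH Suc.prems(3) unfolding Z'_def by blast
  define M' where "M' = Max Z'"
  have "M' \<in> Z'"
    using \<open>finite Z'\<close> \<open>card Z' = Suc n\<close> unfolding M'_def by (intro Max_in) auto
  then have "M' < M" "g M' = g M"
    using Suc.prems \<open>M \<in> Z\<close> unfolding Z'_def M_def by (auto simp: less_le intro: Max_ge)
  moreover have "continuous_on {M'..M} g"
    using der by (meson DERIV_isCont continuous_at_imp_continuous_on)
  moreover have "\<And>x. g differentiable (at x)"
    using der real_differentiable_def by blast
  ultimately obtain w where w: "M' < w" "w < M" "DERIV g w :> 0"
    using Rolle by blast
  have "g' w = 0"
    using DERIV_unique[OF der w(3)] .
  moreover have "w \<notin> W'"
    using W'(3) w(1) unfolding M'_def by force
  ultimately show ?case
    using W' w \<open>M' < M\<close> unfolding M_def[symmetric] M'_def[symmetric]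
    by (intro exI[of _ "insert w W'"]) auto
qed

lemma exp_sum_card_zeros_less:
  fixes lam c :: "'i \<Rightarrow> real"
  assumes "finite I" "I \<noteq> {}" "inj_on lam I" "\<And>i. i \<in> I \<Longrightarrow> c i \<noteq> 0"
    and "finite Z" "\<And>z. z \<in> Z \<Longrightarrow> (\<Sum>i\<in>I. c i * exp (lam i * z)) = 0"
  shows "card Z < card I"
  using assms
proof (induction I arbitrary: c Z rule: finite_induct)
  case empty
  then show ?case by simp
next
  case (insert b I)
  show ?case
  proof (cases "Z = {}")
    case True
    then show ?thesis using insert.hyps by simp
  next
    case False
    then obtain m where m: "card Z = Suc m"
      using insert.prems(4) by (metis card_0_eq not0_implies_Suc)
    define g where "g x = c b + (\<Sum>i\<in>I. c i * exp ((lam i - lam b) * x))" for x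
    define g' where "g' x = (\<Sum>i\<in>I. c i * (lam i - lam b) * exp ((lam i - lam b) * x))" for x
    have "(g has_real_derivative g' x) (at x)" for x
      unfolding g_def g'_def by (auto intro!: derivative_eq_intros sum.cong)
    moreover have "g z = exp (- lam b * z) * (\<Sum>i\<in>insert b I. c i * exp (lam i * z))" for z
      using insert.hyps unfolding g_def
      by (simp add: sum_distrib_left algebra_simps flip: exp_add)
    ultimately obtain W where W: "finite W" "card W = m" "\<forall>w\<in>W. g' w = 0"
      using Rolle_card_deriv_zeros[of g g' Z m] insert.prems m by auto
    show ?thesis
    proof (cases "I = {}")
      case True
      then show ?thesis
        using insert.prems \<open>Z \<noteq> {}\<close> by auto
    next
      case False
      have "(\<Sum>i\<in>I. c i * (lam i - lam b) * exp (lam i * w)) = exp (lam b * w) * g' w" for w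
        unfolding g'_def sum_distrib_left
        by (intro sum.cong) (simp_all add: algebra_simps flip: exp_add)
      then have "card W < card I"
        using insert.hyps insert.prems W False
        by (intro insert.IH[where c = "\<lambda>i. c i * (lam i - lam b)"])
          (auto simp: inj_on_def)
      then show ?thesis
        using W(2) m insert.hyps by simp
    qed
  qed
qed

lemma powr_sum_card_zeros_less:
  fixes a c :: "'i \<Rightarrow> real"
  assumes "finite I" "I \<noteq> {}" "inj_on a I"
    and "\<And>i. i \<in> I \<Longrightarrow> a i > 0" "\<And>i. i \<in> I \<Longrightarrow> c i \<noteq> 0"
    and "finite Z" "\<And>z. z \<in> Z \<Longrightarrow> (\<Sum>i\<in>I. c i * a i powr z) = 0"
  shows "card Z < card I"
proof (rule exp_sum_card_zeros_less[where lam = "\<lambda>i. ln (a i)"])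
  show "inj_on (\<lambda>i. ln (a i)) I"
    using assms(3,4) by (auto simp: inj_on_def)
  show "(\<Sum>i\<in>I. c i * exp (ln (a i) * z)) = 0" if "z \<in> Z" for z
  proof -
    have "(\<Sum>i\<in>I. c i * exp (ln (a i) * z)) = (\<Sum>i\<in>I. c i * a i powr z)"
      using assms(4)
      by (intro sum.cong refl) (simp add: powr_def mult.commute less_imp_neq[THEN not_sym])
    then show ?thesis
      using assms(7)[OF that] by simp
  qed
qed (use assms in auto)

lemma nat_ceiling_half_bounds:
  fixes p :: real and k :: nat
  assumes "0 < p" "\<not> (\<exists>m::nat. even m \<and> p = real m)" "k = nat \<lceil>p / 2\<rceil>"
  shows "1 \<le> k" "2 * real k - 2 < p" "p < 2 * real k"
proof -
  have "real k = of_int \<lceil>p / 2\<rceil>"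
    using assms(1,3) by simp
  then have "1 \<le> k" "2 * real k - 2 < p" "p \<le> 2 * real k"
    using assms(1) ceiling_correct[of "p / 2"] by linarith+
  moreover have "p \<noteq> 2 * real k"
    using assms(2)[unfolded not_ex, rule_format, of "2 * k"] by simp
  ultimately show "1 \<le> k" "2 * real k - 2 < p" "p < 2 * real k"
    by auto
qed

theorem corollary3p8:
  fixes p :: real and k :: nat
  assumes "0 < p"
    and "\<not> (\<exists>m::nat. even m \<and> p = real m)"
    and "k = nat \<lceil>p / 2\<rceil>"
  shows "(\<Sum>j=0..k-1. real ((2*k) choose j) * (-1) ^ j * (real (k - j)) powr p) \<noteq> 0"
proof
  let ?F = "\<lambda>z. \<Sum>j=0..k-1. real ((2*k) choose j) * (-1) ^ j * (real (k - j)) powr z"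
  assume "?F p = 0"
  note k = nat_ceiling_half_bounds[OF assms]
  have F_even: "?F (2 * real m) = 0" if "m \<in> {1..k-1}" for m
  proof -
    have "?F (2 * real m) = (\<Sum>j=0..k-1. real ((2*k) choose j) * (-1) ^ j * (real (k - j)) ^ (2*m))"
      using k by (intro sum.cong refl) (simp add: powr_realpow[symmetric])
    also have "\<dots> = 0"
      using that k by (intro alternating_binomial_half_sum_even_power_eq_0) auto
    finally show ?thesis .
  qed
  define Z where "Z = insert p ((\<lambda>m. 2 * real m) ` {1..k-1})"
  have "card Z < card {0..k-1}"
    unfolding Z_def using \<open>?F p = 0\<close> F_even k
    by (intro powr_sum_card_zeros_less[where a = "\<lambda>j. real (k - j)"]) (auto simp: inj_on_def)
  moreover have "p \<notin> (\<lambda>m. 2 * real m) ` {1..k-1}"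
    using k by auto
  then have "card Z = k"
    unfolding Z_def using k by (simp add: card_image inj_on_def)
  ultimately show False
    using k by simp
qed

end
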